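(* Let $\mathbb{P}=\langle \mathit{PF},\Pi\rangle$ be a well-defined ground ProbLog program and let $\mathbb{P}'$ be the $\mathrm{LP}^{\mathrm{MLN}}$ program containing, for each probabilistic fact $pr::a$ in $\mathit{PF}$: the rules $\ln(pr):\ a$ and $\ln(1-pr):\ \bot\leftarrow a$ if $0<pr<1$; the rule $\alpha:\ a$ if $pr=1$; the rule $\alpha:\ \bot\leftarrow a$ if $pr=0$; and containing $\alpha:R$ for each rule $R\in\Pi$. Then $\mathbb{P}$ and $\mathbb{P}'$ have the same probability distribution over all interpretations: $P_{\mathbb{P}}(I)=P_{\mathbb{P}'}(I)$ for every interpretation $I$.
   Context: Interpretations are sets of ground atoms of a signature $\sigma$ with finitely many ground atoms. Ground atoms are divided into probabilistic atoms and derived atoms. A ground ProbLog program $\mathbb{P}=\langle\mathit{PF},\Pi\rangle$ consists of a set $\mathit{PF}$ of probabilistic facts $pr::a$ ($a$ a probabilistic atom, $pr\in[0,1]$ its probability $pr(a)$), and a set $\Pi$ of ground normal rules $A\leftarrow B_1,\dots,B_m,\mathit{not}\ B_{m+1},\dots,\mathit{not}\ B_n$ with $A$ not a probabilistic atom. A total choice $\mathit{TC}$ is a subset of the probabilistic atoms, with probability $\Pr_{\mathbb{P}}(\mathit{TC})=\prod_{a\in\mathit{TC}}pr(a)\cdot\prod_{b\notin \mathit{TC}}(1-pr(b))$ ($b$ ranging over probabilistic atoms). $\mathbb{P}$ is well-defined if for each total choice $\mathit{TC}$, $\Pi\cup\mathit{TC}$ has a total (two-valued) well-founded model. For such $\mathbb{P}$,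 $P_{\mathbb{P}}(I)=\Pr_{\mathbb{P}}(\mathit{TC})$ if there is a total choice $\mathit{TC}$ such that $I$ is the total well-founded model of $\Pi\cup\mathit{TC}$, and $0$ otherwise. A formula is negative if every atom occurrence is in the scope of negation. A rule has the form $A\leftarrow B\wedge N$ ($A$ a possibly empty disjunction of atoms, $B$ a conjunction of atoms, $N$ a negative formula; $\mathit{not}$ is $\neg$). The reduct $\Pi^I$ of a ground program consists of $A\leftarrow B$ for rules with $I\models N$; $I$ is a stable model if it is a minimal model of $\Pi^I$. An $\mathrm{LP}^{\mathrm{MLN}}$ program is a finite set of weighted rules $w:R$ ($w$ real or the symbol $\alpha$); $\Pi_I=\{w:R\mid I\models R\}$; $\mathrm{SM}[\Pi]=\{I\mid I$ stable model of the unweighted $\Pi_I\}$; $W_\Pi(I)=\exp(\sum_{w:R\in\Pi_I}w)$ if $I\in\mathrm{SM}[\Pi]$, else $0$; $P_\Pi(I)=\lim_{\alpha\to\infty}W_\Pi(I)/\sum_{J\in\mathrm{SM}[\Pi]}W_\Pi(J)$. *)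

theory Defs
  imports Complex_Main
begin

datatype 'a nrule = NRule (nhead: 'a) (npos: "'a set") (nneg: "'a set")

definition tp :: "('a \<times> 'a set) set \<Rightarrow> 'a set \<Rightarrow> 'a set" where
  "tp P X = {h. \<exists>B. (h, B) \<in> P \<and> B \<subseteq> X}"

definition least_model :: "('a \<times> 'a set) set \<Rightarrow> 'a set" where
  "least_model P = lfp (tp P)"

definition gl_op :: "'a nrule set \<Rightarrow> 'a set \<Rightarrow> 'a set" where
  "gl_op \<Pi> J = least_model {(nhead r, npos r) | r. r \<in> \<Pi> \<and> nneg r \<inter> J = {}}"

(* well-founded model via the alternating fixpoint (Van Gelder):
   true atoms = lfp of Gamma^2, non-false atoms = Gamma(true atoms) *)
definition wf_true :: "'a nrule set \<Rightarrow> 'a set" where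
  "wf_true \<Pi> = lfp (\<lambda>J. gl_op \<Pi> (gl_op \<Pi> J))"

definition wf_nonfalse :: "'a nrule set \<Rightarrow> 'a set" where
  "wf_nonfalse \<Pi> = gl_op \<Pi> (wf_true \<Pi>)"

definition wf_total :: "'a nrule set \<Rightarrow> bool" where
  "wf_total \<Pi> \<longleftrightarrow> wf_true \<Pi> = wf_nonfalse \<Pi>"

(* A ProbLog program is given by the finite set PA of probabilistic atoms, the
   probability function pr (probabilistic fact  pr a :: a  for a in PA), and
   the set of rules Pi. *)
definition problog_program :: "'a set \<Rightarrow> ('a \<Rightarrow> real) \<Rightarrow> 'a nrule set \<Rightarrow> bool" where
  "problog_program PA pr \<Pi> \<longleftrightarrow> finite PA \<and> finite \<Pi> \<and>
     (\<forall>a\<in>PA. 0 \<le> pr a \<and> pr a \<le> 1) \<and>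
     (\<forall>r\<in>\<Pi>. nhead r \<notin> PA \<and> finite (npos r) \<and> finite (nneg r))"

definition with_choice :: "'a nrule set \<Rightarrow> 'a set \<Rightarrow> 'a nrule set" where
  "with_choice \<Pi> TC = \<Pi> \<union> {NRule a {} {} | a. a \<in> TC}"

definition tc_prob :: "'a set \<Rightarrow> ('a \<Rightarrow> real) \<Rightarrow> 'a set \<Rightarrow> real" where
  "tc_prob PA pr TC = (\<Prod>a\<in>TC. pr a) * (\<Prod>b\<in>PA - TC. 1 - pr b)"

definition problog_well_defined :: "'a set \<Rightarrow> 'a nrule set \<Rightarrow> bool" where
  "problog_well_defined PA \<Pi> \<longleftrightarrow> (\<forall>TC. TC \<subseteq> PA \<longrightarrow> wf_total (with_choice \<Pi> TC))"

definition problog_prob :: "'a set \<Rightarrow> ('a \<Rightarrow> real) \<Rightarrow> 'a nrule set \<Rightarrow> 'a set \<Rightarrow> real" where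
  "problog_prob PA pr \<Pi> I =
     (if \<exists>TC. TC \<subseteq> PA \<and> wf_total (with_choice \<Pi> TC) \<and> wf_true (with_choice \<Pi> TC) = I
      then tc_prob PA pr (SOME TC. TC \<subseteq> PA \<and> wf_total (with_choice \<Pi> TC)
                                    \<and> wf_true (with_choice \<Pi> TC) = I)
      else 0)"

(* rule  A <- B \<and> N  with A a (possibly empty) disjunction of the atoms in mhead,
   B the conjunction of the atoms in mpos, and N the negative formula
   (conjunction of  not b  for b in mneg) *)
datatype 'a mrule = MRule (mhead: "'a set") (mpos: "'a set") (mneg: "'a set")

datatype weight = Hard | Soft real   (* Hard = the symbol alpha *)

fun wval :: "real \<Rightarrow> weight \<Rightarrow> real" where
  "wval \<alpha> Hard = \<alpha>"
| "wval \<alpha> (Soft w) = w"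

definition sat_neg :: "'a set \<Rightarrow> 'a mrule \<Rightarrow> bool" where
  "sat_neg I r \<longleftrightarrow> mneg r \<inter> I = {}"

definition sat_rule :: "'a set \<Rightarrow> 'a mrule \<Rightarrow> bool" where
  "sat_rule I r \<longleftrightarrow> (mpos r \<subseteq> I \<and> sat_neg I r \<longrightarrow> mhead r \<inter> I \<noteq> {})"

definition reduct :: "'a mrule set \<Rightarrow> 'a set \<Rightarrow> ('a set \<times> 'a set) set" where
  "reduct R I = {(mhead r, mpos r) | r. r \<in> R \<and> sat_neg I r}"

definition pos_model :: "'a set \<Rightarrow> ('a set \<times> 'a set) set \<Rightarrow> bool" where
  "pos_model I P \<longleftrightarrow> (\<forall>(A, B)\<in>P. B \<subseteq> I \<longrightarrow> A \<inter> I \<noteq> {})"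

definition stable_model :: "'a mrule set \<Rightarrow> 'a set \<Rightarrow> bool" where
  "stable_model R I \<longleftrightarrow> pos_model I (reduct R I) \<and>
     (\<forall>J. J \<subset> I \<longrightarrow> \<not> pos_model J (reduct R I))"

definition sat_part :: "(weight \<times> 'a mrule) set \<Rightarrow> 'a set \<Rightarrow> (weight \<times> 'a mrule) set" where
  "sat_part \<Pi> I = {wr \<in> \<Pi>. sat_rule I (snd wr)}"

definition SM :: "(weight \<times> 'a mrule) set \<Rightarrow> 'a set set" where
  "SM \<Pi> = {I. finite I \<and> stable_model (snd ` sat_part \<Pi> I) I}"

definition lpmln_W :: "(weight \<times> 'a mrule) set \<Rightarrow> real \<Rightarrow> 'a set \<Rightarrow> real" where
  "lpmln_W \<Pi> \<alpha> I = (if I \<in> SM \<Pi> then exp (\<Sum>wr\<in>sat_part \<Pi> I. wval \<alpha> (fst wr)) else 0)"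

definition lpmln_prob :: "(weight \<times> 'a mrule) set \<Rightarrow> 'a set \<Rightarrow> real" where
  "lpmln_prob \<Pi> I = Lim at_top (\<lambda>\<alpha>. lpmln_W \<Pi> \<alpha> I / (\<Sum>J\<in>SM \<Pi>. lpmln_W \<Pi> \<alpha> J))"

definition problog_to_lpmln ::
  "'a set \<Rightarrow> ('a \<Rightarrow> real) \<Rightarrow> 'a nrule set \<Rightarrow> (weight \<times> 'a mrule) set" where
  "problog_to_lpmln PA pr \<Pi> =
     {(Soft (ln (pr a)), MRule {a} {} {}) | a. a \<in> PA \<and> 0 < pr a \<and> pr a < 1}
   \<union> {(Soft (ln (1 - pr a)), MRule {} {a} {}) | a. a \<in> PA \<and> 0 < pr a \<and> pr a < 1}
   \<union> {(Hard, MRule {a} {} {}) | a. a \<in> PA \<and> pr a = 1}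
   \<union> {(Hard, MRule {} {a} {}) | a. a \<in> PA \<and> pr a = 0}
   \<union> {(Hard, MRule {nhead r} (npos r) (nneg r)) | r. r \<in> \<Pi>}"

end

theory Submission
  imports Defs
begin

(* Call a stable model of the translation hard-stable if it satisfies every hard rule.  For such
   an interpretation J the hard rules force J \<inter> PA to be a total choice of nonzero probability,
   and the LP^MLN reduct is the Gelfond-Lifschitz reduct of Pi \<union> (J \<inter> PA) plus constraints that
   J satisfies; so J is stable iff it is a fixpoint of the Gelfond-Lifschitz operator of
   Pi \<union> (J \<inter> PA), i.e. (the program being well-defined) its well-founded model.  Thus the
   hard-stable models are exactly the well-founded models of Pi \<union> TC for the total choices TC of
   nonzero probability.  Every other stable model violates some hard rule and loses a factor
   exp alpha, so in the limit alpha \<rightarrow> \<infinity> only the hard-stable models keep positive probability,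
   proportional to their soft weight exp (\<Sum> ln (pr a) + \<Sum> ln (1 - pr a)), which is the
   probability of TC.  These sum to 1, so the normalisation is trivial. *)

lemma mono_tp: "mono (tp P)"
  unfolding mono_def tp_def by blast

lemma tp_least_model: "tp P (least_model P) \<subseteq> least_model P"
  unfolding least_model_def using lfp_unfold[OF mono_tp, of P] by simp

lemma least_model_lowerbound: "tp P K \<subseteq> K \<Longrightarrow> least_model P \<subseteq> K"
  unfolding least_model_def by (rule lfp_lowerbound)

lemma least_model_rule: "(h, B) \<in> P \<Longrightarrow> B \<subseteq> least_model P \<Longrightarrow> h \<in> least_model P"
  using tp_least_model[of P] unfolding tp_def by blast

lemma least_model_subset_heads: "least_model P \<subseteq> fst ` P"
  by (rule least_model_lowerbound) (force simp: tp_def)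

lemma least_model_mono: "P1 \<subseteq> P2 \<Longrightarrow> least_model P1 \<subseteq> least_model P2"
  by (rule least_model_lowerbound) (use tp_least_model[of P2] in \<open>auto simp: tp_def\<close>)

lemma gl_op_antimono: "J1 \<subseteq> J2 \<Longrightarrow> gl_op R J2 \<subseteq> gl_op R J1"
  unfolding gl_op_def by (rule least_model_mono) blast

lemma gl_op_rule:
  "r \<in> R \<Longrightarrow> nneg r \<inter> J = {} \<Longrightarrow> npos r \<subseteq> gl_op R J \<Longrightarrow> nhead r \<in> gl_op R J"
  unfolding gl_op_def by (rule least_model_rule) auto

lemma gl_op_wf_true:
  assumes "wf_total R"
  shows "gl_op R (wf_true R) = wf_true R"
  using assms unfolding wf_total_def wf_nonfalse_def by simp

lemma gl_op_fixpoint_eq_wf_true: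
  assumes "wf_total R" and "gl_op R M = M"
  shows "M = wf_true R"
proof -
  have "wf_true R \<subseteq> M"
    unfolding wf_true_def by (rule lfp_lowerbound) (simp add: assms)
  then have "gl_op R M \<subseteq> gl_op R (wf_true R)"
    by (rule gl_op_antimono)
  with assms \<open>wf_true R \<subseteq> M\<close> show ?thesis
    unfolding wf_total_def wf_nonfalse_def by simp
qed

lemma pos_model_reduct_iff:
  "pos_model K (reduct R J) \<longleftrightarrow> (\<forall>r\<in>R. sat_neg J r \<longrightarrow> mpos r \<subseteq> K \<longrightarrow> mhead r \<inter> K \<noteq> {})"
  unfolding pos_model_def reduct_def by auto

lemma stable_model_subset_heads:
  assumes "stable_model R I"
  shows "I \<subseteq> \<Union>(mhead ` R)"
proof (rule ccontr)
  assume "\<not> I \<subseteq> \<Union>(mhead ` R)"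
  then have "I \<inter> \<Union>(mhead ` R) \<subset> I"
    by auto
  moreover have "pos_model (I \<inter> \<Union>(mhead ` R)) (reduct R I)"
    using assms unfolding stable_model_def pos_model_reduct_iff by blast
  ultimately show False
    using assms unfolding stable_model_def by blast
qed

definition definite_reduct :: "'a mrule set \<Rightarrow> 'a set \<Rightarrow> ('a \<times> 'a set) set" where
  "definite_reduct R J = {(h, mpos r) | h r. r \<in> R \<and> sat_neg J r \<and> mhead r = {h}}"

lemma tp_definite_reduct:
  assumes "pos_model K (reduct R J)"
  shows "tp (definite_reduct R J) K \<subseteq> K"
  using assms unfolding tp_def definite_reduct_def pos_model_reduct_iff by fastforce

(* With at most one head atom per rule, the reduct is a definite program plus constraints;
   the constraints are harmless once J satisfies R. *)
lemma stable_model_iff_least_model: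
  assumes heads: "\<forall>r\<in>R. mhead r = {} \<or> (\<exists>h. mhead r = {h})"
    and sat: "\<forall>r\<in>R. sat_rule J r"
  shows "stable_model R J \<longleftrightarrow> J = least_model (definite_reduct R J)"
proof
  assume stable: "stable_model R J"
  then have model: "pos_model J (reduct R J)"
    unfolding stable_model_def by simp
  then have least_sub: "least_model (definite_reduct R J) \<subseteq> J"
    by (intro least_model_lowerbound tp_definite_reduct)
  have "pos_model (least_model (definite_reduct R J)) (reduct R J)"
    unfolding pos_model_reduct_iff
  proof (intro ballI impI)
    fix r
    assume r: "r \<in> R" "sat_neg J r" "mpos r \<subseteq> least_model (definite_reduct R J)"
    with least_sub model have "mhead r \<inter> J \<noteq> {}"
      unfolding pos_model_reduct_iff by blast
    with heads r(1) obtain h where h: "mhead r = {h}"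
      by blast
    with r have "(h, mpos r) \<in> definite_reduct R J"
      unfolding definite_reduct_def by blast
    with r(3) h show "mhead r \<inter> least_model (definite_reduct R J) \<noteq> {}"
      using least_model_rule by fastforce
  qed
  with stable least_sub show "J = least_model (definite_reduct R J)"
    unfolding stable_model_def by blast
next
  assume J: "J = least_model (definite_reduct R J)"
  have "\<not> pos_model K (reduct R J)" if "K \<subset> J" for K
    using that J least_model_lowerbound[OF tp_definite_reduct, of K R J] by blast
  moreover have "pos_model J (reduct R J)"
    using sat unfolding pos_model_reduct_iff sat_rule_def by blast
  ultimately show "stable_model R J"
    unfolding stable_model_def by blast
qed

definition hard_rules :: "(weight \<times> 'a mrule) set \<Rightarrow> (weight \<times> 'a mrule) set" where
  "hard_rules P = {wr \<in> P. fst wr = Hard}"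

definition soft_weight :: "(weight \<times> 'a mrule) set \<Rightarrow> 'a set \<Rightarrow> real" where
  "soft_weight P I = (\<Sum>wr\<in>sat_part P I - hard_rules P. wval 0 (fst wr))"

definition hard_stable_models :: "(weight \<times> 'a mrule) set \<Rightarrow> 'a set set" where
  "hard_stable_models P = {I \<in> SM P. hard_rules P \<subseteq> sat_part P I}"

lemma lpmln_W_eq:
  assumes "finite P"
  shows "lpmln_W P \<alpha> I = (if I \<in> SM P
    then exp (\<alpha> * real (card (hard_rules P \<inter> sat_part P I)) + soft_weight P I) else 0)"
proof -
  have "finite (sat_part P I)"
    using assms unfolding sat_part_def by simp
  then have "(\<Sum>wr\<in>sat_part P I. wval \<alpha> (fst wr)) =
      (\<Sum>wr\<in>sat_part P I \<inter> hard_rules P. wval \<alpha> (fst wr))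
      + (\<Sum>wr\<in>sat_part P I - hard_rules P. wval \<alpha> (fst wr))"
    by (rule sum.Int_Diff)
  also have "(\<Sum>wr\<in>sat_part P I \<inter> hard_rules P. wval \<alpha> (fst wr))
      = \<alpha> * real (card (hard_rules P \<inter> sat_part P I))"
    by (simp add: hard_rules_def Int_commute)
  also have "(\<Sum>wr\<in>sat_part P I - hard_rules P. wval \<alpha> (fst wr)) = soft_weight P I"
  proof -
    have "wval \<alpha> w = wval 0 w" if "w \<noteq> Hard" for w
      using that by (cases w) auto
    then show ?thesis
      unfolding soft_weight_def by (intro sum.cong) (auto simp: hard_rules_def sat_part_def)
  qed
  finally show ?thesis
    unfolding lpmln_W_def by simp
qed

lemma tendsto_exp_ratio_at_top:
  fixes f s :: "'b \<Rightarrow> real"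
  assumes "finite S" and "I \<in> S" and le: "\<forall>J\<in>S. f J \<le> N" and "\<exists>J\<in>S. f J = N"
  shows "((\<lambda>\<alpha>. exp (\<alpha> * f I + s I) / (\<Sum>J\<in>S. exp (\<alpha> * f J + s J)))
    \<longlongrightarrow> (if f I = N then exp (s I) / (\<Sum>J\<in>{J\<in>S. f J = N}. exp (s J)) else 0)) at_top"
proof -
  define e where "e J = (if f J = N then exp (s J) else 0)" for J
  \<comment> \<open>divide numerator and denominator by \<open>exp (\<alpha> * N)\<close>\<close>
  have scaled: "((\<lambda>\<alpha>. exp (s J + (f J - N) * \<alpha>)) \<longlongrightarrow> e J) at_top" if "J \<in> S" for J
  proof (cases "f J = N")
    case False
    with le that have "f J - N < 0"
      by force
    then have "filterlim (\<lambda>\<alpha>. (f J - N) * \<alpha>) at_bot at_top"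
      by (rule filterlim_tendsto_neg_mult_at_bot[OF tendsto_const _ filterlim_ident])
    then have "filterlim (\<lambda>\<alpha>. s J + (f J - N) * \<alpha>) at_bot at_top"
      by (simp add: filterlim_tendsto_add_at_bot_iff[OF tendsto_const])
    then have "((\<lambda>\<alpha>. exp (s J + (f J - N) * \<alpha>)) \<longlongrightarrow> 0) at_top"
      by (rule filterlim_compose[OF exp_at_bot])
    with False show ?thesis
      by (simp add: e_def)
  qed (simp add: e_def)
  have "((\<lambda>\<alpha>. \<Sum>J\<in>S. exp (s J + (f J - N) * \<alpha>)) \<longlongrightarrow> (\<Sum>J\<in>S. e J)) at_top"
    by (rule tendsto_sum) (rule scaled)
  moreover have "(\<Sum>J\<in>S. e J) = (\<Sum>J\<in>{J\<in>S. f J = N}. exp (s J))"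
    unfolding e_def using \<open>finite S\<close> by (simp add: sum.If_cases Int_def)
  moreover have "(\<Sum>J\<in>{J\<in>S. f J = N}. exp (s J)) > 0"
    using assms by (intro sum_pos) auto
  ultimately have lim: "((\<lambda>\<alpha>. exp (s I + (f I - N) * \<alpha>) / (\<Sum>J\<in>S. exp (s J + (f J - N) * \<alpha>)))
      \<longlongrightarrow> e I / (\<Sum>J\<in>{J\<in>S. f J = N}. exp (s J))) at_top"
    using scaled[OF \<open>I \<in> S\<close>] by (intro tendsto_divide) auto
  have eq: "exp (s I + (f I - N) * \<alpha>) / (\<Sum>J\<in>S. exp (s J + (f J - N) * \<alpha>))
      = exp (\<alpha> * f I + s I) / (\<Sum>J\<in>S. exp (\<alpha> * f J + s J))" for \<alpha>
  proof -
    have "exp (s J + (f J - N) * \<alpha>) = exp (\<alpha> * f J + s J) / exp (\<alpha> * N)" for J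
      by (simp add: exp_diff[symmetric] algebra_simps)
    then show ?thesis
      by (simp add: sum_divide_distrib[symmetric])
  qed
  have "e I / (\<Sum>J\<in>{J\<in>S. f J = N}. exp (s J))
      = (if f I = N then exp (s I) / (\<Sum>J\<in>{J\<in>S. f J = N}. exp (s J)) else 0)"
    by (simp add: e_def)
  with lim show ?thesis
    unfolding eq by simp
qed

lemma lpmln_prob_eq_hard_stable_models:
  assumes "finite P" and "finite (SM P)" and "hard_stable_models P \<noteq> {}"
  shows "lpmln_prob P I = (if I \<in> hard_stable_models P
    then exp (soft_weight P I) / (\<Sum>J\<in>hard_stable_models P. exp (soft_weight P J)) else 0)"
proof (cases "I \<in> SM P")
  case False
  then show ?thesis
    unfolding lpmln_prob_def lpmln_W_def hard_stable_models_def
    by (simp add: tendsto_Lim[OF trivial_limit_at_top_linorder tendsto_const])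
next
  case True
  define f where "f J = real (card (hard_rules P \<inter> sat_part P J))" for J
  define N where "N = real (card (hard_rules P))"
  have "finite (hard_rules P)"
    using assms(1) unfolding hard_rules_def by simp
  have full_iff: "f J = N \<longleftrightarrow> hard_rules P \<subseteq> sat_part P J" for J
  proof -
    have "f J = N \<longleftrightarrow> hard_rules P \<inter> sat_part P J = hard_rules P"
      unfolding f_def N_def
      using card_subset_eq[OF \<open>finite (hard_rules P)\<close>, of "hard_rules P \<inter> sat_part P J"] by auto
    then show ?thesis
      by blast
  qed
  have "\<forall>J\<in>SM P. f J \<le> N"
    unfolding f_def N_def using \<open>finite (hard_rules P)\<close> by (simp add: card_mono)
  moreover have "\<exists>J\<in>SM P. f J = N"
    using assms(3) full_iff unfolding hard_stable_models_def by blast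
  ultimately have "((\<lambda>\<alpha>. lpmln_W P \<alpha> I / (\<Sum>J\<in>SM P. lpmln_W P \<alpha> J))
      \<longlongrightarrow> (if f I = N then exp (soft_weight P I)
            / (\<Sum>J\<in>{J\<in>SM P. f J = N}. exp (soft_weight P J)) else 0)) at_top"
    using tendsto_exp_ratio_at_top[OF assms(2) True, of f N "soft_weight P"]
    by (simp add: lpmln_W_eq[OF assms(1)] f_def True cong: sum.cong)
  then show ?thesis
    unfolding lpmln_prob_def using True full_iff
    by (simp add: tendsto_Lim hard_stable_models_def)
qed

definition admissible_choice :: "'a set \<Rightarrow> ('a \<Rightarrow> real) \<Rightarrow> 'a set \<Rightarrow> bool" where
  "admissible_choice PA pr TC \<longleftrightarrow>
     TC \<subseteq> PA \<and> (\<forall>a\<in>PA. pr a = 1 \<longrightarrow> a \<in> TC) \<and> (\<forall>a\<in>PA. pr a = 0 \<longrightarrow> a \<notin> TC)"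

lemma tc_prob_not_admissible:
  assumes "finite PA" and "TC \<subseteq> PA" and "\<not> admissible_choice PA pr TC"
  shows "tc_prob PA pr TC = 0"
proof -
  have "finite TC"
    using assms(1,2) by (rule finite_subset[rotated])
  moreover from assms consider a where "a \<in> PA - TC" "pr a = 1" | a where "a \<in> TC" "pr a = 0"
    unfolding admissible_choice_def by auto
  ultimately show ?thesis
    using assms(1) unfolding tc_prob_def by cases auto
qed

lemma sum_tc_prob_admissible:
  assumes "finite PA"
  shows "(\<Sum>TC\<in>{TC. admissible_choice PA pr TC}. tc_prob PA pr TC) = 1"
proof -
  have "(\<Sum>TC\<in>{TC. admissible_choice PA pr TC}. tc_prob PA pr TC) = (\<Sum>TC\<in>Pow PA. tc_prob PA pr TC)"
    using assms tc_prob_not_admissible[OF assms]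
    by (intro sum.mono_neutral_left) (auto simp: admissible_choice_def)
  also have "\<dots> = (\<Prod>a\<in>PA. pr a + (1 - pr a))"
    unfolding tc_prob_def by (rule prod_add[symmetric, OF assms])
  finally show ?thesis
    by simp
qed

lemma gl_op_with_choice_subset: "gl_op (with_choice \<Pi> TC) J \<subseteq> nhead ` \<Pi> \<union> TC"
  using least_model_subset_heads unfolding gl_op_def with_choice_def by fastforce

lemma choice_subset_gl_op_with_choice: "TC \<subseteq> gl_op (with_choice \<Pi> TC) J"
  using gl_op_rule[of "NRule _ {} {}" "with_choice \<Pi> TC"] unfolding with_choice_def by fastforce

lemma gl_op_with_choice_Int:
  assumes "\<forall>r\<in>\<Pi>. nhead r \<notin> PA" and "TC \<subseteq> PA"
  shows "gl_op (with_choice \<Pi> TC) J \<inter> PA = TC"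
  using assms gl_op_with_choice_subset choice_subset_gl_op_with_choice by fastforce

lemma wf_true_with_choice_Int:
  assumes "problog_program PA pr \<Pi>" and "problog_well_defined PA \<Pi>" and "TC \<subseteq> PA"
  shows "wf_true (with_choice \<Pi> TC) \<inter> PA = TC"
proof -
  have "wf_total (with_choice \<Pi> TC)"
    using assms(2,3) unfolding problog_well_defined_def by blast
  then have "wf_true (with_choice \<Pi> TC) = gl_op (with_choice \<Pi> TC) (wf_true (with_choice \<Pi> TC))"
    by (simp add: gl_op_wf_true)
  also have "\<dots> \<inter> PA = TC"
    using assms(1,3) unfolding problog_program_def by (intro gl_op_with_choice_Int) auto
  finally show ?thesis .
qed

lemma problog_prob_wf_true:
  assumes "problog_program PA pr \<Pi>" and "problog_well_defined PA \<Pi>" and "TC \<subseteq> PA"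
  shows "problog_prob PA pr \<Pi> (wf_true (with_choice \<Pi> TC)) = tc_prob PA pr TC"
proof -
  let ?I = "wf_true (with_choice \<Pi> TC)"
  have choice: "TC \<subseteq> PA \<and> wf_total (with_choice \<Pi> TC) \<and> wf_true (with_choice \<Pi> TC) = ?I"
    using assms(2,3) unfolding problog_well_defined_def by blast
  moreover have "(SOME TC'. TC' \<subseteq> PA \<and> wf_total (with_choice \<Pi> TC')
      \<and> wf_true (with_choice \<Pi> TC') = ?I) = TC"
  proof (rule some_equality)
    fix TC'
    assume "TC' \<subseteq> PA \<and> wf_total (with_choice \<Pi> TC') \<and> wf_true (with_choice \<Pi> TC') = ?I"
    then show "TC' = TC"
      using wf_true_with_choice_Int[OF assms(1,2)] assms(3) by metis
  qed (rule choice)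
  ultimately show ?thesis
    unfolding problog_prob_def by auto
qed

lemma problog_prob_eq:
  assumes "problog_program PA pr \<Pi>" and "problog_well_defined PA \<Pi>"
  shows "problog_prob PA pr \<Pi> I =
    (if I \<in> (\<lambda>TC. wf_true (with_choice \<Pi> TC)) ` {TC. admissible_choice PA pr TC}
     then tc_prob PA pr (I \<inter> PA) else 0)"
proof (cases "\<exists>TC. TC \<subseteq> PA \<and> wf_true (with_choice \<Pi> TC) = I")
  case True
  then obtain TC where TC: "TC \<subseteq> PA" "wf_true (with_choice \<Pi> TC) = I"
    by blast
  then have TC_eq: "TC = I \<inter> PA"
    using wf_true_with_choice_Int[OF assms] by blast
  have "I \<in> (\<lambda>TC. wf_true (with_choice \<Pi> TC)) ` {TC. admissible_choice PA pr TC}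
      \<longleftrightarrow> admissible_choice PA pr TC"
  proof
    assume "I \<in> (\<lambda>TC. wf_true (with_choice \<Pi> TC)) ` {TC. admissible_choice PA pr TC}"
    then obtain TC' where "admissible_choice PA pr TC'" "wf_true (with_choice \<Pi> TC') = I"
      by blast
    moreover from this have "TC' = TC"
      using wf_true_with_choice_Int[OF assms, of TC'] TC_eq unfolding admissible_choice_def by blast
    ultimately show "admissible_choice PA pr TC"
      by simp
  qed (use TC in blast)
  moreover have "tc_prob PA pr TC = 0" if "\<not> admissible_choice PA pr TC"
    using assms(1) TC that tc_prob_not_admissible unfolding problog_program_def by blast
  ultimately show ?thesis
    using problog_prob_wf_true[OF assms TC(1)] TC TC_eq by auto
next
  case False
  then have "I \<notin> (\<lambda>TC. wf_true (with_choice \<Pi> TC)) ` {TC. admissible_choice PA pr TC}"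
    unfolding admissible_choice_def by blast
  with False show ?thesis
    unfolding problog_prob_def by auto
qed

lemma problog_to_lpmln_cases:
  assumes "(w, r) \<in> problog_to_lpmln PA pr \<Pi>"
  obtains (fact) a where "a \<in> PA" "r = MRule {a} {} {}"
  | (constraint) a where "a \<in> PA" "r = MRule {} {a} {}"
  | (rule) r' where "r' \<in> \<Pi>" "r = MRule {nhead r'} (npos r') (nneg r')"
  using assms unfolding problog_to_lpmln_def by auto

lemma finite_problog_to_lpmln:
  assumes "problog_program PA pr \<Pi>"
  shows "finite (problog_to_lpmln PA pr \<Pi>)"
proof -
  have "problog_to_lpmln PA pr \<Pi> =
      (\<lambda>a. (Soft (ln (pr a)), MRule {a} {} {})) ` {a. a \<in> PA \<and> 0 < pr a \<and> pr a < 1}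
    \<union> (\<lambda>a. (Soft (ln (1 - pr a)), MRule {} {a} {})) ` {a. a \<in> PA \<and> 0 < pr a \<and> pr a < 1}
    \<union> (\<lambda>a. (Hard, MRule {a} {} {})) ` {a. a \<in> PA \<and> pr a = 1}
    \<union> (\<lambda>a. (Hard, MRule {} {a} {})) ` {a. a \<in> PA \<and> pr a = 0}
    \<union> (\<lambda>r. (Hard, MRule {nhead r} (npos r) (nneg r))) ` \<Pi>"
    unfolding problog_to_lpmln_def by (simp only: setcompr_eq_image Collect_mem_eq)
  then show ?thesis
    using assms unfolding problog_program_def by auto
qed

lemma finite_SM_problog_to_lpmln:
  assumes "problog_program PA pr \<Pi>"
  shows "finite (SM (problog_to_lpmln PA pr \<Pi>))"
proof -
  let ?P = "problog_to_lpmln PA pr \<Pi>"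
  have "SM ?P \<subseteq> Pow (\<Union>(mhead ` snd ` ?P))"
    using stable_model_subset_heads unfolding SM_def sat_part_def by fastforce
  moreover have "finite (\<Union>(mhead ` snd ` ?P))"
    using finite_problog_to_lpmln[OF assms]
    by (auto elim!: problog_to_lpmln_cases)
  ultimately show ?thesis
    by (meson finite_Pow_iff finite_subset)
qed

lemma hard_rules_problog_to_lpmln:
  "hard_rules (problog_to_lpmln PA pr \<Pi>) =
      (\<lambda>a. (Hard, MRule {a} {} {})) ` {a \<in> PA. pr a = 1}
    \<union> (\<lambda>a. (Hard, MRule {} {a} {})) ` {a \<in> PA. pr a = 0}
    \<union> (\<lambda>r. (Hard, MRule {nhead r} (npos r) (nneg r))) ` \<Pi>"
  unfolding hard_rules_def problog_to_lpmln_def by auto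

lemma hard_rules_problog_to_lpmln_subset_sat_part_iff:
  "hard_rules (problog_to_lpmln PA pr \<Pi>) \<subseteq> sat_part (problog_to_lpmln PA pr \<Pi>) J \<longleftrightarrow>
     admissible_choice PA pr (J \<inter> PA) \<and> (\<forall>r\<in>\<Pi>. sat_rule J (MRule {nhead r} (npos r) (nneg r)))"
proof -
  let ?P = "problog_to_lpmln PA pr \<Pi>"
  have "hard_rules ?P \<subseteq> sat_part ?P J \<longleftrightarrow> (\<forall>wr\<in>hard_rules ?P. sat_rule J (snd wr))"
    unfolding sat_part_def hard_rules_def by auto
  also have "\<dots> \<longleftrightarrow> admissible_choice PA pr (J \<inter> PA)
      \<and> (\<forall>r\<in>\<Pi>. sat_rule J (MRule {nhead r} (npos r) (nneg r)))"
    unfolding hard_rules_problog_to_lpmln admissible_choice_def ball_Un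
    by (auto simp: sat_rule_def sat_neg_def)
  finally show ?thesis .
qed

lemma fact_in_problog_to_lpmln:
  assumes "a \<in> PA" and "0 < pr a" and "pr a \<le> 1"
  shows "\<exists>w. (w, MRule {a} {} {}) \<in> problog_to_lpmln PA pr \<Pi>"
  using assms unfolding problog_to_lpmln_def by (cases "pr a = 1") auto

lemma with_choice_rule_in_sat_part:
  assumes "problog_program PA pr \<Pi>"
    and hard: "hard_rules (problog_to_lpmln PA pr \<Pi>) \<subseteq> sat_part (problog_to_lpmln PA pr \<Pi>) J"
    and r: "r \<in> with_choice \<Pi> (J \<inter> PA)"
  shows "\<exists>w. (w, MRule {nhead r} (npos r) (nneg r)) \<in> sat_part (problog_to_lpmln PA pr \<Pi>) J"
proof (cases "r \<in> \<Pi>")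
  case True
  then show ?thesis
    using hard unfolding hard_rules_problog_to_lpmln by blast
next
  case False
  with r obtain a where a: "r = NRule a {} {}" "a \<in> J \<inter> PA"
    unfolding with_choice_def by blast
  with hard have "0 < pr a" "pr a \<le> 1"
    using assms(1) unfolding hard_rules_problog_to_lpmln_subset_sat_part_iff
      admissible_choice_def problog_program_def by force+
  with a show ?thesis
    using fact_in_problog_to_lpmln[of a PA pr \<Pi>]
    unfolding sat_part_def sat_rule_def by auto
qed

lemma definite_reduct_problog_to_lpmln:
  assumes "problog_program PA pr \<Pi>"
    and "hard_rules (problog_to_lpmln PA pr \<Pi>) \<subseteq> sat_part (problog_to_lpmln PA pr \<Pi>) J"
  shows "definite_reduct (snd ` sat_part (problog_to_lpmln PA pr \<Pi>) J) J
    = {(nhead r, npos r) | r. r \<in> with_choice \<Pi> (J \<inter> PA) \<and> nneg r \<inter> J = {}}"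
    (is "?D = ?G")
proof
  show "?D \<subseteq> ?G"
  proof
    fix x
    assume "x \<in> ?D"
    then obtain w r h where wr: "(w, r) \<in> problog_to_lpmln PA pr \<Pi>" and x: "x = (h, mpos r)"
      and r: "sat_rule J r" "sat_neg J r" "mhead r = {h}"
      unfolding definite_reduct_def sat_part_def by auto
    from wr show "x \<in> ?G"
    proof (cases rule: problog_to_lpmln_cases)
      case (fact a)
      with r have "NRule a {} {} \<in> with_choice \<Pi> (J \<inter> PA)"
        unfolding with_choice_def sat_rule_def sat_neg_def by auto
      with fact r x show ?thesis
        by force
    next
      case (rule r')
      with r x show ?thesis
        unfolding with_choice_def sat_neg_def by force
    qed (use r in simp)
  qed
next
  show "?G \<subseteq> ?D"
  proof
    fix x
    assume "x \<in> ?G"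
    then obtain r where x: "x = (nhead r, npos r)" and r: "r \<in> with_choice \<Pi> (J \<inter> PA)"
      and neg: "nneg r \<inter> J = {}"
      by blast
    from with_choice_rule_in_sat_part[OF assms r] neg show "x \<in> ?D"
      unfolding x definite_reduct_def sat_neg_def by force
  qed
qed

lemma stable_model_problog_to_lpmln_iff:
  assumes "problog_program PA pr \<Pi>"
    and "hard_rules (problog_to_lpmln PA pr \<Pi>) \<subseteq> sat_part (problog_to_lpmln PA pr \<Pi>) J"
  shows "stable_model (snd ` sat_part (problog_to_lpmln PA pr \<Pi>) J) J
    \<longleftrightarrow> gl_op (with_choice \<Pi> (J \<inter> PA)) J = J"
proof -
  have "\<forall>r\<in>snd ` sat_part (problog_to_lpmln PA pr \<Pi>) J. mhead r = {} \<or> (\<exists>h. mhead r = {h})"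
    unfolding sat_part_def by (auto elim!: problog_to_lpmln_cases)
  moreover have "\<forall>r\<in>snd ` sat_part (problog_to_lpmln PA pr \<Pi>) J. sat_rule J r"
    unfolding sat_part_def by auto
  ultimately have "stable_model (snd ` sat_part (problog_to_lpmln PA pr \<Pi>) J) J
      \<longleftrightarrow> J = least_model (definite_reduct (snd ` sat_part (problog_to_lpmln PA pr \<Pi>) J) J)"
    by (rule stable_model_iff_least_model)
  then show ?thesis
    unfolding definite_reduct_problog_to_lpmln[OF assms] gl_op_def[symmetric] by auto
qed

lemma gl_op_fixpoint_sat_rule:
  assumes "gl_op R J = J" and "r \<in> R"
  shows "sat_rule J (MRule {nhead r} (npos r) (nneg r))"
  using assms gl_op_rule[of r R J] unfolding sat_rule_def sat_neg_def by auto

lemma wf_true_in_hard_stable_models: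
  assumes "problog_program PA pr \<Pi>" and "problog_well_defined PA \<Pi>"
    and TC: "admissible_choice PA pr TC"
  shows "wf_true (with_choice \<Pi> TC) \<in> hard_stable_models (problog_to_lpmln PA pr \<Pi>)"
proof -
  define J where "J = wf_true (with_choice \<Pi> TC)"
  have "TC \<subseteq> PA"
    using TC unfolding admissible_choice_def by blast
  then have "J \<inter> PA = TC"
    unfolding J_def by (rule wf_true_with_choice_Int[OF assms(1,2)])
  have "wf_total (with_choice \<Pi> TC)"
    using assms(2) \<open>TC \<subseteq> PA\<close> unfolding problog_well_defined_def by blast
  then have fixpoint: "gl_op (with_choice \<Pi> (J \<inter> PA)) J = J"
    using \<open>J \<inter> PA = TC\<close> gl_op_wf_true unfolding J_def by simp
  have "\<forall>r\<in>\<Pi>. sat_rule J (MRule {nhead r} (npos r) (nneg r))"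
    using gl_op_fixpoint_sat_rule[OF fixpoint] unfolding with_choice_def by blast
  then have hard: "hard_rules (problog_to_lpmln PA pr \<Pi>) \<subseteq> sat_part (problog_to_lpmln PA pr \<Pi>) J"
    using TC \<open>J \<inter> PA = TC\<close> hard_rules_problog_to_lpmln_subset_sat_part_iff by blast
  have "finite (nhead ` \<Pi> \<union> J \<inter> PA)"
    using assms(1) unfolding problog_program_def by blast
  then have "finite J"
    using fixpoint gl_op_with_choice_subset[of \<Pi> "J \<inter> PA" J] by (metis finite_subset)
  with fixpoint hard show ?thesis
    using stable_model_problog_to_lpmln_iff[OF assms(1) hard]
    unfolding J_def[symmetric] hard_stable_models_def SM_def by blast
qed

lemma hard_stable_models_problog_to_lpmln:
  assumes "problog_program PA pr \<Pi>" and "problog_well_defined PA \<Pi>"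
  shows "hard_stable_models (problog_to_lpmln PA pr \<Pi>)
    = (\<lambda>TC. wf_true (with_choice \<Pi> TC)) ` {TC. admissible_choice PA pr TC}"
proof (intro equalityI subsetI)
  fix J
  assume "J \<in> hard_stable_models (problog_to_lpmln PA pr \<Pi>)"
  then have hard: "hard_rules (problog_to_lpmln PA pr \<Pi>) \<subseteq> sat_part (problog_to_lpmln PA pr \<Pi>) J"
    and "stable_model (snd ` sat_part (problog_to_lpmln PA pr \<Pi>) J) J"
    unfolding hard_stable_models_def SM_def by auto
  then have "gl_op (with_choice \<Pi> (J \<inter> PA)) J = J"
    using stable_model_problog_to_lpmln_iff[OF assms(1)] by blast
  moreover have "wf_total (with_choice \<Pi> (J \<inter> PA))"
    using assms(2) unfolding problog_well_defined_def by blast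
  ultimately have "J = wf_true (with_choice \<Pi> (J \<inter> PA))"
    by (intro gl_op_fixpoint_eq_wf_true)
  moreover have "admissible_choice PA pr (J \<inter> PA)"
    using hard unfolding hard_rules_problog_to_lpmln_subset_sat_part_iff by blast
  ultimately show "J \<in> (\<lambda>TC. wf_true (with_choice \<Pi> TC)) ` {TC. admissible_choice PA pr TC}"
    by blast
qed (use wf_true_in_hard_stable_models[OF assms] in blast)

lemma soft_rules_problog_to_lpmln:
  "sat_part (problog_to_lpmln PA pr \<Pi>) J - hard_rules (problog_to_lpmln PA pr \<Pi>) =
      (\<lambda>a. (Soft (ln (pr a)), MRule {a} {} {})) ` ({a \<in> PA. 0 < pr a \<and> pr a < 1} \<inter> J)
    \<union> (\<lambda>a. (Soft (ln (1 - pr a)), MRule {} {a} {})) ` ({a \<in> PA. 0 < pr a \<and> pr a < 1} - J)"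
  unfolding sat_part_def hard_rules_def problog_to_lpmln_def sat_rule_def sat_neg_def by auto

lemma soft_weight_problog_to_lpmln:
  fixes pr :: "'a \<Rightarrow> real"
  assumes "finite PA"
  defines "M \<equiv> {a \<in> PA. 0 < pr a \<and> pr a < 1}"
  shows "soft_weight (problog_to_lpmln PA pr \<Pi>) J
    = (\<Sum>a\<in>M \<inter> J. ln (pr a)) + (\<Sum>a\<in>M - J. ln (1 - pr a))"
proof -
  have "finite M"
    using assms(1) unfolding M_def by simp
  then have "soft_weight (problog_to_lpmln PA pr \<Pi>) J
      = (\<Sum>wr\<in>(\<lambda>a. (Soft (ln (pr a)), MRule {a} {} {})) ` (M \<inter> J). wval 0 (fst wr))
      + (\<Sum>wr\<in>(\<lambda>a. (Soft (ln (1 - pr a)), MRule {} {a} {})) ` (M - J). wval 0 (fst wr))"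
    unfolding soft_weight_def soft_rules_problog_to_lpmln M_def[symmetric]
    by (intro sum.union_disjoint) auto
  also have "\<dots> = (\<Sum>a\<in>M \<inter> J. ln (pr a)) + (\<Sum>a\<in>M - J. ln (1 - pr a))"
    by (simp add: sum.reindex inj_on_def)
  finally show ?thesis .
qed

lemma exp_soft_weight_problog_to_lpmln:
  assumes "problog_program PA pr \<Pi>" and "admissible_choice PA pr (J \<inter> PA)"
  shows "exp (soft_weight (problog_to_lpmln PA pr \<Pi>) J) = tc_prob PA pr (J \<inter> PA)"
proof -
  define M where "M = {a \<in> PA. 0 < pr a \<and> pr a < 1}"
  have "finite PA" and pr: "\<forall>a\<in>PA. 0 \<le> pr a \<and> pr a \<le> 1"
    using assms(1) unfolding problog_program_def by auto
  have "exp (soft_weight (problog_to_lpmln PA pr \<Pi>) J) = (\<Prod>a\<in>M \<inter> J. pr a) * (\<Prod>a\<in>M - J. 1 - pr a)"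
    using \<open>finite PA\<close> by (simp add: soft_weight_problog_to_lpmln exp_add exp_sum M_def)
  \<comment> \<open>atoms outside \<open>M\<close> have probability 0 or 1 and contribute a factor 1\<close>
  also have "(\<Prod>a\<in>M \<inter> J. pr a) = (\<Prod>a\<in>J \<inter> PA. pr a)"
    using \<open>finite PA\<close> assms(2) pr unfolding M_def admissible_choice_def
    by (intro prod.mono_neutral_left) force+
  also have "(\<Prod>a\<in>M - J. 1 - pr a) = (\<Prod>a\<in>PA - J \<inter> PA. 1 - pr a)"
    using \<open>finite PA\<close> assms(2) pr unfolding M_def admissible_choice_def
    by (intro prod.mono_neutral_left) force+
  finally show ?thesis
    unfolding tc_prob_def .
qed

lemma sum_exp_soft_weight_hard_stable_models:
  assumes "problog_program PA pr \<Pi>" and "problog_well_defined PA \<Pi>"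
  shows "(\<Sum>J\<in>hard_stable_models (problog_to_lpmln PA pr \<Pi>).
      exp (soft_weight (problog_to_lpmln PA pr \<Pi>) J)) = 1"
proof -
  let ?wf = "\<lambda>TC. wf_true (with_choice \<Pi> TC)"
  have Int: "?wf TC \<inter> PA = TC" if "admissible_choice PA pr TC" for TC
    using that wf_true_with_choice_Int[OF assms] unfolding admissible_choice_def by blast
  then have "inj_on ?wf {TC. admissible_choice PA pr TC}"
    by (intro inj_onI) (metis mem_Collect_eq)
  then have "(\<Sum>J\<in>hard_stable_models (problog_to_lpmln PA pr \<Pi>).
      exp (soft_weight (problog_to_lpmln PA pr \<Pi>) J))
      = (\<Sum>TC\<in>{TC. admissible_choice PA pr TC}. exp (soft_weight (problog_to_lpmln PA pr \<Pi>) (?wf TC)))"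
    unfolding hard_stable_models_problog_to_lpmln[OF assms] by (simp add: sum.reindex)
  also have "\<dots> = (\<Sum>TC\<in>{TC. admissible_choice PA pr TC}. tc_prob PA pr TC)"
  proof (rule sum.cong)
    fix TC
    assume "TC \<in> {TC. admissible_choice PA pr TC}"
    then have "admissible_choice PA pr (?wf TC \<inter> PA)" and "?wf TC \<inter> PA = TC"
      using Int by auto
    then show "exp (soft_weight (problog_to_lpmln PA pr \<Pi>) (?wf TC)) = tc_prob PA pr TC"
      using exp_soft_weight_problog_to_lpmln[OF assms(1)] by metis
  qed simp
  also have "\<dots> = 1"
    using assms(1) unfolding problog_program_def by (intro sum_tc_prob_admissible) blast
  finally show ?thesis .
qed

theorem theorem4:
  fixes PA :: "'a set" and pr :: "'a \<Rightarrow> real" and \<Pi> :: "'a nrule set" and I :: "'a set"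
  assumes "problog_program PA pr \<Pi>"
    and "problog_well_defined PA \<Pi>"
    and "finite I"
  shows "problog_prob PA pr \<Pi> I = lpmln_prob (problog_to_lpmln PA pr \<Pi>) I"
proof -
  let ?P = "problog_to_lpmln PA pr \<Pi>"
  have hard_stable: "hard_stable_models ?P
      = (\<lambda>TC. wf_true (with_choice \<Pi> TC)) ` {TC. admissible_choice PA pr TC}"
    using assms(1,2) by (rule hard_stable_models_problog_to_lpmln)
  have "admissible_choice PA pr {a \<in> PA. 0 < pr a}"
    unfolding admissible_choice_def by auto
  then have nonempty: "hard_stable_models ?P \<noteq> {}"
    unfolding hard_stable by blast
  have "lpmln_prob ?P I = (if I \<in> hard_stable_models ?P
      then exp (soft_weight ?P I) / (\<Sum>J\<in>hard_stable_models ?P. exp (soft_weight ?P J)) else 0)"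
    using finite_problog_to_lpmln[OF assms(1)] finite_SM_problog_to_lpmln[OF assms(1)] nonempty
    by (rule lpmln_prob_eq_hard_stable_models)
  also have "\<dots> = (if I \<in> hard_stable_models ?P then tc_prob PA pr (I \<inter> PA) else 0)"
    using sum_exp_soft_weight_hard_stable_models[OF assms(1,2)]
      exp_soft_weight_problog_to_lpmln[OF assms(1)]
    unfolding hard_stable_models_def hard_rules_problog_to_lpmln_subset_sat_part_iff by auto
  finally show ?thesis
    using problog_prob_eq[OF assms(1,2)] unfolding hard_stable by simp
qed

end
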